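(* Let $n\geq 2$ and $\mathbf{q},\mathbf{p}\in(\Bbbk^\times)^n$. Then $B_n(\mathbf{q})\cong B_n(\mathbf{p})$ if and only if there exist $\alpha_0,\dots,\alpha_{n-1}\in\Bbbk^\times$ and $0\le k<n$ such that $p_i=\frac{\alpha_{i+k+1}}{\alpha_{i+k}}q_{i+k}$ for all $0\le i<n$ (indices modulo $n$).
   Context: $\Bbbk$ is an algebraically closed field of characteristic zero. Paths are written left to right ($xy$ means $x$ then $y$). For $n\ge2$ and $\mathbf{q}=(q_0,\dots,q_{n-1})\in(\Bbbk^\times)^n$, $B_n(\mathbf{q})=\Bbbk Q/(b_ia_i-q_ia_ib_{i+1},\ i=0,\dots,n-1)$, where $Q$ has vertices $e_0,\dots,e_{n-1}$, arrows $a_i:e_i\to e_{i+1}$ and a loop $b_i$ at $e_i$ for each $i$, indices modulo $n$. *)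

theory Defs
  imports "HOL-Computational_Algebra.Polynomial"
begin

text \<open>The quiver Q: vertices 0..n-1, arrows a_i : i -> i+1 (mod n), loops b_i at i.
  Paths are written left to right; a path is (start vertex, list of arrows).\<close>

datatype arr = Arr_a nat | Arr_b nat

fun arr_src :: "arr \<Rightarrow> nat" where
  "arr_src (Arr_a i) = i"
| "arr_src (Arr_b i) = i"

fun arr_tgt :: "nat \<Rightarrow> arr \<Rightarrow> nat" where
  "arr_tgt n (Arr_a i) = Suc i mod n"
| "arr_tgt n (Arr_b i) = i"

type_synonym qpath = "nat \<times> arr list"

fun path_tgt :: "nat \<Rightarrow> nat \<Rightarrow> arr list \<Rightarrow> nat" where
  "path_tgt n v [] = v"
| "path_tgt n v (x # ws) = path_tgt n (arr_tgt n x) ws"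

fun path_ok :: "nat \<Rightarrow> nat \<Rightarrow> arr list \<Rightarrow> bool" where
  "path_ok n v [] = True"
| "path_ok n v (x # ws) = (arr_src x = v \<and> path_ok n (arr_tgt n x) ws)"

definition valid_path :: "nat \<Rightarrow> qpath \<Rightarrow> bool" where
  "valid_path n p = (fst p < n \<and> path_ok n (fst p) (snd p))"

text \<open>Elements of the path algebra kQ: finitely supported functions on valid paths.\<close>

definition pelt :: "nat \<Rightarrow> (qpath \<Rightarrow> 'k::field) \<Rightarrow> bool" where
  "pelt n f = (finite {p. f p \<noteq> 0} \<and> (\<forall>p. f p \<noteq> 0 \<longrightarrow> valid_path n p))"

definition padd :: "(qpath \<Rightarrow> 'k::field) \<Rightarrow> (qpath \<Rightarrow> 'k) \<Rightarrow> qpath \<Rightarrow> 'k" where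
  "padd f g = (\<lambda>p. f p + g p)"

definition psub :: "(qpath \<Rightarrow> 'k::field) \<Rightarrow> (qpath \<Rightarrow> 'k) \<Rightarrow> qpath \<Rightarrow> 'k" where
  "psub f g = (\<lambda>p. f p - g p)"

definition psmult :: "'k::field \<Rightarrow> (qpath \<Rightarrow> 'k) \<Rightarrow> qpath \<Rightarrow> 'k" where
  "psmult c f = (\<lambda>p. c * f p)"

text \<open>Multiplication = concatenation of paths (zero if not composable), extended bilinearly.\<close>
definition pmult :: "nat \<Rightarrow> (qpath \<Rightarrow> 'k::field) \<Rightarrow> (qpath \<Rightarrow> 'k) \<Rightarrow> qpath \<Rightarrow> 'k" where
  "pmult n f g = (\<lambda>(v, ws). \<Sum>j\<le>length ws.
      f (v, take j ws) * g (path_tgt n v (take j ws), drop j ws))"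

definition punit :: "nat \<Rightarrow> qpath \<Rightarrow> 'k::field" where
  "punit n = (\<lambda>(v, ws). if ws = [] \<and> v < n then 1 else 0)"

definition pbasis :: "qpath \<Rightarrow> qpath \<Rightarrow> 'k::field" where
  "pbasis p = (\<lambda>p'. if p' = p then 1 else 0)"

definition brel :: "nat \<Rightarrow> (nat \<Rightarrow> 'k::field) \<Rightarrow> nat \<Rightarrow> qpath \<Rightarrow> 'k" where
  "brel n q i = psub (pbasis (i, [Arr_b i, Arr_a i]))
                     (psmult (q i) (pbasis (i, [Arr_a i, Arr_b (Suc i mod n)])))"

inductive_set rel_ideal :: "nat \<Rightarrow> (nat \<Rightarrow> 'k::field) \<Rightarrow> (qpath \<Rightarrow> 'k) set"
  for n :: nat and q :: "nat \<Rightarrow> 'k" where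
  zero: "(\<lambda>_. 0) \<in> rel_ideal n q"
| gen: "\<lbrakk>pelt n x; pelt n y; i < n\<rbrakk> \<Longrightarrow> pmult n (pmult n x (brel n q i)) y \<in> rel_ideal n q"
| add: "\<lbrakk>f \<in> rel_ideal n q; g \<in> rel_ideal n q\<rbrakk> \<Longrightarrow> padd f g \<in> rel_ideal n q"

text \<open>B_n(q) = kQ / I_q is isomorphic (as k-algebra) to B_n(p) = kQ / I_p:
  there is a map phi : kQ -> kQ inducing a surjective k-algebra homomorphism
  kQ -> kQ / I_p whose kernel is exactly I_q.\<close>
definition B_iso :: "nat \<Rightarrow> (nat \<Rightarrow> 'k::field) \<Rightarrow> (nat \<Rightarrow> 'k) \<Rightarrow> bool" where
  "B_iso n q p = (\<exists>\<phi> :: (qpath \<Rightarrow> 'k) \<Rightarrow> (qpath \<Rightarrow> 'k).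
      (\<forall>x. pelt n x \<longrightarrow> pelt n (\<phi> x))
    \<and> (\<forall>x y. pelt n x \<longrightarrow> pelt n y \<longrightarrow>
          psub (\<phi> (padd x y)) (padd (\<phi> x) (\<phi> y)) \<in> rel_ideal n p)
    \<and> (\<forall>c x. pelt n x \<longrightarrow> psub (\<phi> (psmult c x)) (psmult c (\<phi> x)) \<in> rel_ideal n p)
    \<and> (\<forall>x y. pelt n x \<longrightarrow> pelt n y \<longrightarrow>
          psub (\<phi> (pmult n x y)) (pmult n (\<phi> x) (\<phi> y)) \<in> rel_ideal n p)
    \<and> psub (\<phi> (punit n)) (punit n) \<in> rel_ideal n p
    \<and> (\<forall>x. pelt n x \<longrightarrow> (\<phi> x \<in> rel_ideal n p \<longleftrightarrow> x \<in> rel_ideal n q))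
    \<and> (\<forall>y. pelt n y \<longrightarrow> (\<exists>x. pelt n x \<and> psub (\<phi> x) y \<in> rel_ideal n p)))"

end

theory Submission
  imports Defs "HOL-Library.Function_Algebras"
begin

text \<open>Both sides of the equivalence say that \<open>\<Prod>i<n. p\<^sub>i = \<Prod>i<n. q\<^sub>i\<close>. For the condition on
  \<open>\<alpha>\<close> and \<open>k\<close> the factors \<open>\<alpha>\<^bsub>i+1\<^esub> / \<alpha>\<^sub>i\<close> telescope around the cycle. If the
  products agree, rescaling each loop \<open>b\<^sub>i\<close> by \<open>g\<^sub>i = \<Prod>j<i. p\<^sub>j / q\<^sub>j\<close> maps the relations of
  \<open>B\<^sub>n(q)\<close> onto those of \<open>B\<^sub>n(p)\<close>.

  Conversely, for every vertex \<open>j\<close> there is a representation \<open>\<rho>\<^sub>j\<close> of \<open>B\<^sub>n(p)\<close> in upper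
  triangular \<open>2\<times>2\<close> matrices over \<open>\<Bbbk>[t]\<close>: \<open>e\<^sub>j \<mapsto> E\<^sub>1\<^sub>1\<close>, \<open>e\<^bsub>j+1\<^esub> \<mapsto> E\<^sub>2\<^sub>2\<close>,
  \<open>a\<^sub>j \<mapsto> E\<^sub>1\<^sub>2\<close>, \<open>b\<^sub>j \<mapsto> t E\<^sub>1\<^sub>1\<close>, \<open>b\<^bsub>j+1\<^esub> \<mapsto> (t / p\<^sub>j) E\<^sub>2\<^sub>2\<close>, and all other
  generators to \<open>0\<close>. Composing with an isomorphism \<open>B\<^sub>n(q) \<cong> B\<^sub>n(p)\<close> gives a representation of
  \<open>B\<^sub>n(q)\<close> with non-commutative image, so some arrow \<open>a\<^bsub>\<sigma> j\<^esub>\<close> has a nonzero off-diagonal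
  image. This pins down the diagonal images of the vertices, forces \<open>b\<^bsub>\<sigma> j\<^esub>\<close> to act in the
  upper corner by a linear polynomial with leading coefficient \<open>\<lambda>\<^sub>j\<close> (the image contains
  \<open>t E\<^sub>1\<^sub>1\<close>), and the relation at \<open>\<sigma> j\<close> ties it to the lower corner. As the lower corner of
  \<open>\<rho>\<^sub>j\<close> is the upper corner of \<open>\<rho>\<^bsub>j+1\<^esub>\<close> with \<open>t\<close> replaced by \<open>t / p\<^sub>j\<close>, \<open>\<sigma>\<close> is a
  rotation and \<open>p\<^sub>j \<lambda>\<^sub>j = q\<^bsub>\<sigma> j\<^esub> \<lambda>\<^bsub>j+1\<^esub>\<close>; multiplying over \<open>j\<close> gives \<open>\<Prod> p = \<Prod> q\<close>.\<close>

section \<open>The path algebra\<close>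

lemma path_tgt_append [simp]: "path_tgt n v (u @ u') = path_tgt n (path_tgt n v u) u'"
  by (induction u arbitrary: v) auto

lemma path_ok_append [simp]:
  "path_ok n v (u @ u') \<longleftrightarrow> path_ok n v u \<and> path_ok n (path_tgt n v u) u'"
  by (induction u arbitrary: v) auto

lemma path_tgt_less: "v < n \<Longrightarrow> path_ok n v ws \<Longrightarrow> path_tgt n v ws < n"
proof (induction ws arbitrary: v)
  case (Cons x ws)
  then show ?case by (cases x) auto
qed simp

lemma Suc_mod_neq:
  assumes "2 \<le> n" "i < n"
  shows "Suc i mod n \<noteq> i"
proof (cases "Suc i < n")
  case False
  then have "Suc i = n" using assms(2) by simp
  then show ?thesis using assms(1) by auto
qed auto

lemma sum_fun_apply: "(\<Sum>i\<in>I. F i) x = (\<Sum>i\<in>I. F i x)"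
  by (induction I rule: infinite_finite_induct) auto

abbreviation gen_e :: "nat \<Rightarrow> qpath \<Rightarrow> 'k::field" where "gen_e v \<equiv> pbasis (v, [])"
abbreviation gen_a :: "nat \<Rightarrow> qpath \<Rightarrow> 'k::field" where "gen_a i \<equiv> pbasis (i, [Arr_a i])"
abbreviation gen_b :: "nat \<Rightarrow> qpath \<Rightarrow> 'k::field" where "gen_b i \<equiv> pbasis (i, [Arr_b i])"

lemma valid_path_gens [simp]:
  "v < n \<Longrightarrow> valid_path n (v, [])"
  "v < n \<Longrightarrow> valid_path n (v, [Arr_a v])"
  "v < n \<Longrightarrow> valid_path n (v, [Arr_b v])"
  by (simp_all add: valid_path_def)

lemma padd_eq_plus: "padd f g = f + g"
  by (simp add: padd_def plus_fun_def)

lemma psub_as_padd: "psub f g = padd f (psmult (-1) g)"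
  by (auto simp: psub_def padd_def psmult_def)

lemma psub_self: "psub f f = (\<lambda>_. 0)"
  by (simp add: psub_def)

lemma psmult_sum: "psmult c (\<Sum>i\<in>I. G i) = (\<Sum>i\<in>I. psmult c (G i))"
  by (rule ext) (simp add: psmult_def sum_fun_apply sum_distrib_left)

lemma pmult_pbasis_apply:
  "pmult n (pbasis (v, u)) (pbasis (w, u')) (x, ws) =
     (if path_tgt n v u = w \<and> x = v \<and> ws = u @ u' then 1 else 0)"
proof -
  define c where "c = (if path_tgt n v u = w \<and> x = v \<and> ws = u @ u' then (1::'a) else 0)"
  have summand: "pbasis (v, u) (x, take j ws) * pbasis (w, u') (path_tgt n x (take j ws), drop j ws)
      = (if j = length u then c else 0)" if "j \<le> length ws" for j
  proof (cases "take j ws = u")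
    case True
    then have "length u = j" using that by auto
    then show ?thesis using True append_take_drop_id[of j ws] by (auto simp: pbasis_def c_def)
  qed (auto simp: pbasis_def c_def)
  have "pmult n (pbasis (v, u)) (pbasis (w, u')) (x, ws) =
      (\<Sum>j\<le>length ws. if j = length u then c else 0)"
    unfolding pmult_def prod.case by (rule sum.cong) (auto simp: summand)
  also have "\<dots> = (if length u \<le> length ws then c else 0)"
    by (subst sum.delta) auto
  also have "\<dots> = c"
    by (auto simp: c_def)
  finally show ?thesis by (simp add: c_def)
qed

lemma pmult_pbasis:
  "pmult n (pbasis (v, u)) (pbasis (w, u')) =
     (if path_tgt n v u = w then pbasis (v, u @ u') else (\<lambda>_. 0))"
  by (rule ext, clarify) (simp only: pmult_pbasis_apply, simp add: pbasis_def)

lemma pmult_padd_left: "pmult n (padd f g) h = padd (pmult n f h) (pmult n g h)"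
  by (rule ext) (auto simp: pmult_def padd_def sum.distrib ring_distribs)

lemma pmult_padd_right: "pmult n h (padd f g) = padd (pmult n h f) (pmult n h g)"
  by (rule ext) (auto simp: pmult_def padd_def sum.distrib ring_distribs)

lemma pmult_psmult_left: "pmult n (psmult c f) g = psmult c (pmult n f g)"
  by (rule ext) (auto simp: pmult_def psmult_def sum_distrib_left mult.assoc)

lemma pmult_psmult_right: "pmult n f (psmult c g) = psmult c (pmult n f g)"
  by (rule ext) (auto simp: pmult_def psmult_def sum_distrib_left mult.left_commute)

lemma pmult_zero_left [simp]: "pmult n (\<lambda>_. 0) g = (\<lambda>_. 0)"
  by (rule ext) (auto simp: pmult_def)

lemma pmult_zero_right [simp]: "pmult n f (\<lambda>_. 0) = (\<lambda>_. 0)"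
  by (rule ext) (auto simp: pmult_def)

lemma pmult_sum_left: "pmult n (\<Sum>i\<in>I. G i) g = (\<Sum>i\<in>I. pmult n (G i) g)"
  by (induction I rule: infinite_finite_induct)
    (simp_all add: zero_fun_def pmult_padd_left flip: padd_eq_plus)

lemma pmult_sum_right: "pmult n g (\<Sum>i\<in>I. G i) = (\<Sum>i\<in>I. pmult n g (G i))"
  by (induction I rule: infinite_finite_induct)
    (simp_all add: zero_fun_def pmult_padd_right flip: padd_eq_plus)

lemma pelt_zero [simp]: "pelt n (\<lambda>_. 0)"
  by (simp add: pelt_def)

lemma pelt_padd [simp]:
  assumes "pelt n f" "pelt n g"
  shows "pelt n (padd f g)"
proof -
  have "{p. f p + g p \<noteq> 0} \<subseteq> {p. f p \<noteq> 0} \<union> {p. g p \<noteq> 0}" by auto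
  with assms show ?thesis
    unfolding pelt_def padd_def by (metis (lifting) add.right_neutral finite_Un finite_subset)
qed

lemma pelt_psmult [simp]: "pelt n f \<Longrightarrow> pelt n (psmult c f)"
  unfolding pelt_def psmult_def
  by (auto intro: finite_subset[of _ "{p. f p \<noteq> 0}"])

lemma pelt_psub [simp]: "pelt n f \<Longrightarrow> pelt n g \<Longrightarrow> pelt n (psub f g)"
  by (simp add: psub_as_padd)

lemma pelt_sum: "(\<And>i. i \<in> I \<Longrightarrow> pelt n (F i)) \<Longrightarrow> pelt n (\<Sum>i\<in>I. F i)"
  by (induction I rule: infinite_finite_induct)
    (auto simp: zero_fun_def simp flip: padd_eq_plus)

lemma pelt_pbasis [simp]: "valid_path n P \<Longrightarrow> pelt n (pbasis P)"
  by (auto simp: pelt_def pbasis_def)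

lemma pmult_nonzero:
  assumes "pmult n f g (v, ws) \<noteq> 0"
  obtains j where "f (v, take j ws) \<noteq> 0" "g (path_tgt n v (take j ws), drop j ws) \<noteq> 0"
proof -
  from assms obtain j where "f (v, take j ws) * g (path_tgt n v (take j ws), drop j ws) \<noteq> 0"
    unfolding pmult_def by (auto elim!: sum.not_neutral_contains_not_neutral)
  then show thesis by (intro that) auto
qed

lemma pelt_pmult [simp]:
  assumes f: "pelt n f" and g: "pelt n g"
  shows "pelt n (pmult n f g)"
proof -
  let ?S = "(\<lambda>(P, P'). (fst P, snd P @ snd P')) ` ({p. f p \<noteq> 0} \<times> {p. g p \<noteq> 0})"
  have "(v, ws) \<in> ?S \<and> valid_path n (v, ws)" if "pmult n f g (v, ws) \<noteq> 0" for v ws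
    using that
  proof (rule pmult_nonzero)
    fix j assume fj: "f (v, take j ws) \<noteq> 0" and gj: "g (path_tgt n v (take j ws), drop j ws) \<noteq> 0"
    then have "valid_path n (v, take j ws)" "valid_path n (path_tgt n v (take j ws), drop j ws)"
      using f g by (auto simp: pelt_def)
    then have "valid_path n (v, take j ws @ drop j ws)"
      by (auto simp: valid_path_def simp del: append_take_drop_id)
    moreover have "((v, take j ws), (path_tgt n v (take j ws), drop j ws))
        \<in> {p. f p \<noteq> 0} \<times> {p. g p \<noteq> 0}"
      using fj gj by simp
    then have "(v, ws) \<in> ?S" by (force intro!: image_eqI)
    ultimately show ?thesis by simp
  qed
  then have "{p. pmult n f g p \<noteq> 0} \<subseteq> ?S" and "\<forall>p. pmult n f g p \<noteq> 0 \<longrightarrow> valid_path n p"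
    by auto
  moreover have "finite ?S" using f g by (auto simp: pelt_def)
  ultimately show ?thesis
    unfolding pelt_def by (blast intro: finite_subset)
qed

lemma punit_eq_sum: "punit n = (\<Sum>v<n. gen_e v)"
  by (rule ext) (auto simp: sum_fun_apply punit_def pbasis_def)

lemma pelt_punit [simp]: "pelt n (punit n)"
  unfolding punit_eq_sum by (auto intro!: pelt_sum)

lemma pmult_punit_left:
  assumes "pelt n f" shows "pmult n (punit n) f = f"
proof (rule ext, clarify)
  fix v ws
  have "pmult n (punit n) f (v, ws) = (\<Sum>j\<le>length ws. if j = 0 then (if v < n then f (v, ws) else 0) else 0)"
    unfolding pmult_def prod.case
    by (rule sum.cong) (auto simp: punit_def)
  also have "\<dots> = f (v, ws)" using assms by (auto simp: pelt_def valid_path_def)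
  finally show "pmult n (punit n) f (v, ws) = f (v, ws)" .
qed

lemma pmult_punit_right:
  assumes "pelt n f" shows "pmult n f (punit n) = f"
proof (rule ext, clarify)
  fix v ws
  have "pmult n f (punit n) (v, ws) =
      (\<Sum>j\<le>length ws. if j = length ws then (if path_tgt n v ws < n then f (v, ws) else 0) else 0)"
    unfolding pmult_def prod.case
    by (rule sum.cong) (auto simp: punit_def)
  also have "\<dots> = f (v, ws)" using assms path_tgt_less[of v n ws] by (auto simp: pelt_def valid_path_def)
  finally show "pmult n f (punit n) (v, ws) = f (v, ws)" .
qed

lemma pelt_eq_sum_pbasis:
  assumes "pelt n x"
  shows "x = (\<Sum>P\<in>{P. x P \<noteq> 0}. psmult (x P) (pbasis P))"
proof (rule ext)
  fix p
  have "(\<Sum>P\<in>{P. x P \<noteq> 0}. psmult (x P) (pbasis P)) p = (\<Sum>P\<in>{P. x P \<noteq> 0}. if p = P then x p else 0)"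
    unfolding sum_fun_apply by (rule sum.cong) (auto simp: psmult_def pbasis_def)
  also have "\<dots> = x p" using assms by (simp add: pelt_def)
  finally show "x p = (\<Sum>P\<in>{P. x P \<noteq> 0}. psmult (x P) (pbasis P)) p" ..
qed

lemma pbasis_induct [consumes 1, case_names mult e a b]:
  assumes "valid_path n P"
    and mult: "\<And>f g. pelt n f \<Longrightarrow> pelt n g \<Longrightarrow> Pr f \<Longrightarrow> Pr g \<Longrightarrow> Pr (pmult n f g)"
    and e: "\<And>v. v < n \<Longrightarrow> Pr (gen_e v)"
    and a: "\<And>i. i < n \<Longrightarrow> Pr (gen_a i)"
    and b: "\<And>i. i < n \<Longrightarrow> Pr (gen_b i)"
  shows "Pr (pbasis P)"
proof -
  obtain v ws where "P = (v, ws)" by fastforce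
  have "valid_path n (v, ws) \<Longrightarrow> Pr (pbasis (v, ws))"
  proof (induction ws arbitrary: v)
    case Nil then show ?case using e by (simp add: valid_path_def)
  next
    case (Cons x ws)
    then have v: "v < n" and src: "arr_src x = v" and ok: "path_ok n (arr_tgt n x) ws"
      by (auto simp: valid_path_def)
    have "arr_tgt n x < n" using v src by (cases x) auto
    then have "valid_path n (v, [x])" "valid_path n (arr_tgt n x, ws)"
      using v src ok by (simp_all add: valid_path_def)
    moreover have "Pr (pbasis (v, [x]))"
      using src v a b by (cases x) auto
    moreover have "pbasis (v, x # ws) = pmult n (pbasis (v, [x])) (pbasis (arr_tgt n x, ws))"
      by (simp add: pmult_pbasis)
    ultimately show ?case
      using mult[of "pbasis (v, [x])" "pbasis (arr_tgt n x, ws)"] Cons.IH by (metis pelt_pbasis)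
  qed
  then show ?thesis using assms(1) \<open>P = (v, ws)\<close> by simp
qed

lemma pelt_induct [consumes 1, case_names zero add smult mult e a b]:
  assumes x: "pelt n x"
    and zero: "Pr (\<lambda>_. 0)"
    and add: "\<And>f g. pelt n f \<Longrightarrow> pelt n g \<Longrightarrow> Pr f \<Longrightarrow> Pr g \<Longrightarrow> Pr (padd f g)"
    and smult: "\<And>c f. pelt n f \<Longrightarrow> Pr f \<Longrightarrow> Pr (psmult c f)"
    and mult: "\<And>f g. pelt n f \<Longrightarrow> pelt n g \<Longrightarrow> Pr f \<Longrightarrow> Pr g \<Longrightarrow> Pr (pmult n f g)"
    and e: "\<And>v. v < n \<Longrightarrow> Pr (gen_e v)"
    and a: "\<And>i. i < n \<Longrightarrow> Pr (gen_a i)"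
    and b: "\<And>i. i < n \<Longrightarrow> Pr (gen_b i)"
  shows "Pr x"
proof -
  have "Pr (\<Sum>P\<in>S. psmult (x P) (pbasis P))" if "finite S" "\<forall>P\<in>S. valid_path n P" for S
    using that
  proof (induction S rule: finite_induct)
    case empty then show ?case using zero by (simp add: zero_fun_def)
  next
    case (insert P S)
    then have "Pr (psmult (x P) (pbasis P))"
      using smult pbasis_induct[of n P Pr] mult e a b by simp
    with insert show ?case
      unfolding sum.insert[OF insert.hyps] padd_eq_plus[symmetric]
      by (intro add) (auto intro!: pelt_sum)
  qed
  moreover have "finite {P. x P \<noteq> 0}" "\<forall>P\<in>{P. x P \<noteq> 0}. valid_path n P"
    using x by (auto simp: pelt_def)
  ultimately have "Pr (\<Sum>P\<in>{P. x P \<noteq> 0}. psmult (x P) (pbasis P))" by blast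
  then show ?thesis using pelt_eq_sum_pbasis[OF x] by simp
qed

lemma pelt_brel [simp]: "i < n \<Longrightarrow> pelt n (brel n q i)"
  unfolding brel_def by (simp add: valid_path_def)

lemma rel_ideal_pelt: "f \<in> rel_ideal n q \<Longrightarrow> pelt n f"
  by (induction rule: rel_ideal.induct) auto

lemma brel_in_rel_ideal: "i < n \<Longrightarrow> brel n q i \<in> rel_ideal n q"
  using rel_ideal.gen[of n "punit n" "punit n" i q]
  by (simp add: pmult_punit_left pmult_punit_right)

lemma brel_eq: "brel n q i = psub (pmult n (gen_b i) (gen_a i))
    (psmult (q i) (pmult n (gen_a i) (gen_b (Suc i mod n))))"
  by (simp add: brel_def pmult_pbasis)

section \<open>Upper triangular matrices over \<open>\<Bbbk>[t]\<close>\<close>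

datatype 'a ut2 = UT2 (ut11: 'a) (ut12: 'a) (ut22: 'a)

instantiation ut2 :: (comm_ring_1) ring_1
begin
definition zero_ut2_def: "0 = UT2 0 0 0"
definition one_ut2_def: "1 = UT2 1 0 1"
definition plus_ut2_def: "x + y = UT2 (ut11 x + ut11 y) (ut12 x + ut12 y) (ut22 x + ut22 y)"
definition uminus_ut2_def: "- x = UT2 (- ut11 x) (- ut12 x) (- ut22 x)"
definition minus_ut2_def: "x - y = UT2 (ut11 x - ut11 y) (ut12 x - ut12 y) (ut22 x - ut22 y)"
definition times_ut2_def:
  "x * y = UT2 (ut11 x * ut11 y) (ut11 x * ut12 y + ut12 x * ut22 y) (ut22 x * ut22 y)"
instance
  by standard (auto simp: ut2.expand zero_ut2_def one_ut2_def plus_ut2_def uminus_ut2_def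
      minus_ut2_def times_ut2_def algebra_simps)
end

lemma ut2_simps [simp]:
  "ut11 (0::'a::comm_ring_1 ut2) = 0" "ut12 (0::'a ut2) = 0" "ut22 (0::'a ut2) = 0"
  "ut11 (1::'a ut2) = 1" "ut12 (1::'a ut2) = 0" "ut22 (1::'a ut2) = 1"
  "ut11 (x + y) = ut11 x + ut11 y" "ut12 (x + y) = ut12 x + ut12 y" "ut22 (x + y) = ut22 x + ut22 y"
  "ut11 (x - y) = ut11 x - ut11 y" "ut12 (x - y) = ut12 x - ut12 y" "ut22 (x - y) = ut22 x - ut22 y"
  "ut11 (- x) = - ut11 x" "ut12 (- x) = - ut12 x" "ut22 (- x) = - ut22 x"
  "ut11 (x * y) = ut11 x * ut11 y" "ut12 (x * y) = ut11 x * ut12 y + ut12 x * ut22 y"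
  "ut22 (x * y) = ut22 x * ut22 y"
  by (auto simp: zero_ut2_def one_ut2_def plus_ut2_def uminus_ut2_def minus_ut2_def times_ut2_def)

lemma ut2_eq_iff: "x = y \<longleftrightarrow> ut11 x = ut11 y \<and> ut12 x = ut12 y \<and> ut22 x = ut22 y"
  by (cases x; cases y) auto

lemma ut2_sum [simp]:
  fixes F :: "'i \<Rightarrow> 'a::comm_ring_1 ut2"
  shows "ut11 (\<Sum>i\<in>I. F i) = (\<Sum>i\<in>I. ut11 (F i))"
    "ut12 (\<Sum>i\<in>I. F i) = (\<Sum>i\<in>I. ut12 (F i))"
    "ut22 (\<Sum>i\<in>I. F i) = (\<Sum>i\<in>I. ut22 (F i))"
  by (induction I rule: infinite_finite_induct) auto

definition ut2_const :: "'k::field \<Rightarrow> 'k poly ut2" where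
  "ut2_const c = UT2 [:c:] 0 [:c:]"

lemma ut2_const_mult_left:
  "ut2_const c * x = UT2 (smult c (ut11 x)) (smult c (ut12 x)) (smult c (ut22 x))"
  by (simp add: ut2_eq_iff ut2_const_def)

lemma ut2_const_commute: "ut2_const c * x = x * ut2_const c"
  by (simp add: ut2_eq_iff ut2_const_def)

lemma ut2_const_hom:
  "ut2_const 0 = 0" "ut2_const 1 = 1" "ut2_const (c + d) = ut2_const c + ut2_const d"
  "ut2_const (c * d) = ut2_const c * ut2_const d" "ut2_const (- c) = - ut2_const c"
  by (simp_all add: ut2_eq_iff ut2_const_def)

definition qrep_path :: "(nat \<Rightarrow> 'k::field poly ut2) \<Rightarrow> (arr \<Rightarrow> 'k poly ut2) \<Rightarrow> qpath \<Rightarrow> 'k poly ut2"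
  where "qrep_path E r P = E (fst P) * prod_list (map r (snd P))"

definition qrep :: "(nat \<Rightarrow> 'k::field poly ut2) \<Rightarrow> (arr \<Rightarrow> 'k poly ut2) \<Rightarrow> (qpath \<Rightarrow> 'k) \<Rightarrow> 'k poly ut2"
  where "qrep E r f = (\<Sum>P\<in>{P. f P \<noteq> 0}. ut2_const (f P) * qrep_path E r P)"

lemma qrep_path_simps:
  "qrep_path E r (v, []) = E v"
  "qrep_path E r (v, [x]) = E v * r x"
  "qrep_path E r (v, [x, y]) = E v * r x * r y"
  by (auto simp: qrep_path_def mult.assoc)

lemma qrep_eq_sum_superset:
  assumes "finite S" "{P. f P \<noteq> 0} \<subseteq> S"
  shows "qrep E r f = (\<Sum>P\<in>S. ut2_const (f P) * qrep_path E r P)"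
  unfolding qrep_def by (rule sum.mono_neutral_left) (use assms in \<open>auto simp: ut2_const_hom\<close>)

lemma qrep_zero [simp]: "qrep E r (\<lambda>_. 0) = 0"
  by (simp add: qrep_def)

lemma qrep_padd:
  assumes "pelt n f" "pelt n g"
  shows "qrep E r (padd f g) = qrep E r f + qrep E r g"
proof -
  let ?S = "{P. f P \<noteq> 0} \<union> {P. g P \<noteq> 0}"
  have fin: "finite ?S" using assms by (auto simp: pelt_def)
  have "qrep E r (padd f g) = (\<Sum>P\<in>?S. ut2_const (padd f g P) * qrep_path E r P)"
    by (rule qrep_eq_sum_superset[OF fin]) (auto simp: padd_def)
  also have "\<dots> = (\<Sum>P\<in>?S. ut2_const (f P) * qrep_path E r P) + (\<Sum>P\<in>?S. ut2_const (g P) * qrep_path E r P)"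
    by (simp add: padd_def ut2_const_hom ring_distribs sum.distrib)
  also have "\<dots> = qrep E r f + qrep E r g"
    using qrep_eq_sum_superset[OF fin, of f] qrep_eq_sum_superset[OF fin, of g] by auto
  finally show ?thesis .
qed

lemma qrep_psmult: "qrep E r (psmult c f) = ut2_const c * qrep E r f"
proof (cases "finite {P. f P \<noteq> 0}")
  case True
  have "qrep E r (psmult c f) = (\<Sum>P\<in>{P. f P \<noteq> 0}. ut2_const (psmult c f P) * qrep_path E r P)"
    by (rule qrep_eq_sum_superset[OF True]) (auto simp: psmult_def)
  then show ?thesis
    by (simp add: qrep_def psmult_def ut2_const_hom sum_distrib_left mult.assoc)
next
  case False
  then show ?thesis
    by (cases "c = 0") (auto simp: qrep_def ut2_const_hom psmult_def)
qed

lemma qrep_psub: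
  assumes "pelt n f" "pelt n g"
  shows "qrep E r (psub f g) = qrep E r f - qrep E r g"
  using assms by (simp add: psub_as_padd qrep_padd[of n] qrep_psmult ut2_const_hom)

lemma qrep_sum:
  assumes "\<And>i. i \<in> I \<Longrightarrow> pelt n (G i)"
  shows "qrep E r (\<Sum>i\<in>I. G i) = (\<Sum>i\<in>I. qrep E r (G i))"
  using assms
proof (induction I rule: infinite_finite_induct)
  case (insert i I)
  then have "qrep E r (padd (G i) (sum G I)) = qrep E r (G i) + qrep E r (sum G I)"
    by (intro qrep_padd[of n]) (auto intro!: pelt_sum)
  with insert show ?case by (simp add: padd_def)
qed (simp_all add: zero_fun_def)

lemma qrep_pbasis [simp]: "qrep E r (pbasis P) = qrep_path E r P"
proof -
  have "{P'. pbasis P P' \<noteq> (0::'a)} = {P}" by (auto simp: pbasis_def)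
  then show ?thesis by (simp add: qrep_def pbasis_def ut2_const_hom)
qed

lemma pmult_eq_double_sum:
  assumes "pelt n f" "pelt n g"
  shows "pmult n f g = (\<Sum>P\<in>{P. f P \<noteq> 0}. \<Sum>P'\<in>{P. g P \<noteq> 0}.
      psmult (f P) (psmult (g P') (pmult n (pbasis P) (pbasis P'))))"
proof -
  have "pmult n f g = pmult n (\<Sum>P\<in>{P. f P \<noteq> 0}. psmult (f P) (pbasis P))
      (\<Sum>P'\<in>{P. g P \<noteq> 0}. psmult (g P') (pbasis P'))"
    using assms by (simp flip: pelt_eq_sum_pbasis)
  then show ?thesis
    by (simp add: pmult_sum_left pmult_sum_right pmult_psmult_left pmult_psmult_right psmult_sum)
      (subst sum.swap, simp add: psmult_def mult.left_commute)
qed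

locale quiver_rep =
  fixes n :: nat and E :: "nat \<Rightarrow> 'k::field poly ut2" and r :: "arr \<Rightarrow> 'k poly ut2"
  assumes E_orth: "\<And>v w. v < n \<Longrightarrow> w < n \<Longrightarrow> E v * E w = (if v = w then E v else 0)"
    and r_a: "\<And>i. i < n \<Longrightarrow> r (Arr_a i) = E i * r (Arr_a i) * E (Suc i mod n)"
    and r_b: "\<And>i. i < n \<Longrightarrow> r (Arr_b i) = E i * r (Arr_b i) * E i"
begin

lemma arrow_absorbs:
  assumes "arr_src x < n"
  shows "E (arr_src x) * r x = r x" "r x * E (arr_tgt n x) = r x"
proof -
  have eq: "r x = E (arr_src x) * r x * E (arr_tgt n x)"
    using assms r_a r_b by (cases x) auto
  have t: "arr_tgt n x < n" using assms by (cases x) auto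
  have "E (arr_src x) * r x = (E (arr_src x) * E (arr_src x)) * r x * E (arr_tgt n x)"
    by (subst eq) (simp add: mult.assoc)
  then show "E (arr_src x) * r x = r x" using E_orth[OF assms assms] eq[symmetric] by simp
  have "r x * E (arr_tgt n x) = E (arr_src x) * r x * (E (arr_tgt n x) * E (arr_tgt n x))"
    by (subst eq) (simp add: mult.assoc)
  then show "r x * E (arr_tgt n x) = r x" using E_orth[OF t t] eq[symmetric] by simp
qed

lemma path_absorbs_tgt:
  "v < n \<Longrightarrow> path_ok n v ws \<Longrightarrow>
     E v * prod_list (map r ws) * E (path_tgt n v ws) = E v * prod_list (map r ws)"
proof (induction ws arbitrary: v)
  case Nil then show ?case using E_orth[of v v] by simp
next
  case (Cons x ws)
  then have src: "arr_src x = v" and ok: "path_ok n (arr_tgt n x) ws" by auto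
  have t: "arr_tgt n x < n" using Cons.prems src by (cases x) auto
  note absorb = arrow_absorbs[of x, unfolded src, OF Cons.prems(1)]
  let ?t = "arr_tgt n x" and ?T = "path_tgt n (arr_tgt n x) ws" and ?P = "prod_list (map r ws)"
  have "E v * prod_list (map r (x # ws)) * E (path_tgt n v (x # ws)) = (E v * r x) * ?P * E ?T"
    by (simp add: mult.assoc)
  also have "\<dots> = (r x * E ?t) * ?P * E ?T" using absorb by simp
  also have "\<dots> = r x * (E ?t * ?P * E ?T)" by (simp add: mult.assoc)
  also have "\<dots> = r x * (E ?t * ?P)" using Cons.IH[OF t ok] by simp
  also have "\<dots> = (r x * E ?t) * ?P" by (simp add: mult.assoc)
  also have "\<dots> = (E v * r x) * ?P" using absorb by simp
  also have "\<dots> = E v * prod_list (map r (x # ws))" by (simp add: mult.assoc)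
  finally show ?case .
qed

lemma qrep_path_mult:
  assumes "valid_path n (v, u)" "valid_path n (w, u')"
  shows "qrep_path E r (v, u) * qrep_path E r (w, u') =
    (if path_tgt n v u = w then qrep_path E r (v, u @ u') else 0)"
proof -
  have v: "v < n" "path_ok n v u" and w: "w < n" using assms by (auto simp: valid_path_def)
  have t: "path_tgt n v u < n" using path_tgt_less[OF v] .
  have "qrep_path E r (v, u) * qrep_path E r (w, u') =
      E v * prod_list (map r u) * E (path_tgt n v u) * E w * prod_list (map r u')"
    using path_absorbs_tgt[OF v] by (simp add: qrep_path_def mult.assoc)
  also have "\<dots> = (if path_tgt n v u = w then qrep_path E r (v, u @ u') else 0)"
  proof (cases "path_tgt n v u = w")
    case True
    then show ?thesis using path_absorbs_tgt[OF v] E_orth[OF w w]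
      by (simp add: qrep_path_def mult.assoc)
  next
    case False
    then have "E (path_tgt n v u) * E w = 0" using E_orth[OF t w] by simp
    then show ?thesis using False by (simp add: mult.assoc)
  qed
  finally show ?thesis .
qed

lemma qrep_pmult:
  assumes f: "pelt n f" and g: "pelt n g"
  shows "qrep E r (pmult n f g) = qrep E r f * qrep E r g"
proof -
  let ?Sf = "{P. f P \<noteq> 0}" and ?Sg = "{P. g P \<noteq> 0}"
  have vf: "\<And>P. P \<in> ?Sf \<Longrightarrow> valid_path n P" and vg: "\<And>P. P \<in> ?Sg \<Longrightarrow> valid_path n P"
    using f g by (auto simp: pelt_def)
  have basis: "qrep E r (pmult n (pbasis P) (pbasis P')) = qrep_path E r P * qrep_path E r P'"
    if "valid_path n P" "valid_path n P'" for P P'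
    using that qrep_path_mult[of "fst P" "snd P" "fst P'" "snd P'"]
    by (cases P; cases P') (simp add: pmult_pbasis)
  have "qrep E r (pmult n f g) = (\<Sum>P\<in>?Sf. \<Sum>P'\<in>?Sg.
      ut2_const (f P) * (ut2_const (g P') * qrep E r (pmult n (pbasis P) (pbasis P'))))"
    unfolding pmult_eq_double_sum[OF f g]
    by (subst qrep_sum[of _ n], (auto intro!: pelt_sum simp: vf vg)[1],
        rule sum.cong, simp, subst qrep_sum[of _ n], auto simp: vf vg qrep_psmult)
  also have "\<dots> = (\<Sum>P\<in>?Sf. \<Sum>P'\<in>?Sg.
      (ut2_const (f P) * qrep_path E r P) * (ut2_const (g P') * qrep_path E r P'))"
    by (intro sum.cong refl) (simp add: basis vf vg, metis mult.assoc ut2_const_commute)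
  also have "\<dots> = qrep E r f * qrep E r g"
    unfolding qrep_def by (simp add: sum_product)
  finally show ?thesis .
qed

lemma qrep_punit: "qrep E r (punit n) = (\<Sum>v<n. E v)"
  unfolding punit_eq_sum by (subst qrep_sum[of _ n]) (auto simp: qrep_path_simps)

lemma qrep_rel_ideal:
  assumes "\<And>i. i < n \<Longrightarrow> qrep E r (brel n p i) = 0"
  shows "x \<in> rel_ideal n p \<Longrightarrow> qrep E r x = 0"
  by (induction rule: rel_ideal.induct)
    (simp_all add: assms qrep_pmult qrep_padd[of n] rel_ideal_pelt)

end

section \<open>Rescaling the loops\<close>

fun loop_weight :: "(nat \<Rightarrow> 'k::field) \<Rightarrow> arr \<Rightarrow> 'k" where
  "loop_weight g (Arr_a i) = 1"
| "loop_weight g (Arr_b i) = g i"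

definition rescale_loops :: "(nat \<Rightarrow> 'k::field) \<Rightarrow> (qpath \<Rightarrow> 'k) \<Rightarrow> qpath \<Rightarrow> 'k" where
  "rescale_loops g f = (\<lambda>(v, ws). prod_list (map (loop_weight g) ws) * f (v, ws))"

lemma rescale_loops_apply: "rescale_loops g f (v, ws) = prod_list (map (loop_weight g) ws) * f (v, ws)"
  by (simp add: rescale_loops_def)

lemma rescale_loops_pmult:
  "rescale_loops g (pmult n f h) = pmult n (rescale_loops g f) (rescale_loops g h)"
proof (rule ext, clarify)
  fix v ws
  have "\<And>j. prod_list (map (loop_weight g) ws) =
      prod_list (map (loop_weight g) (take j ws)) * prod_list (map (loop_weight g) (drop j ws))"
    by (metis append_take_drop_id map_append prod_list.append)
  then show "rescale_loops g (pmult n f h) (v, ws) = pmult n (rescale_loops g f) (rescale_loops g h) (v, ws)"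
    unfolding rescale_loops_apply pmult_def prod.case sum_distrib_left
    by (intro sum.cong) (auto simp: mult_ac)
qed

lemma rescale_loops_padd: "rescale_loops g (padd f h) = padd (rescale_loops g f) (rescale_loops g h)"
  by (rule ext) (auto simp: rescale_loops_def padd_def ring_distribs)

lemma rescale_loops_psmult: "rescale_loops g (psmult c f) = psmult c (rescale_loops g f)"
  by (rule ext) (auto simp: rescale_loops_def psmult_def mult_ac)

lemma rescale_loops_punit: "rescale_loops g (punit n) = punit n"
  by (rule ext) (auto simp: rescale_loops_def punit_def)

lemma pelt_rescale_loops [simp]: "pelt n f \<Longrightarrow> pelt n (rescale_loops g f)"
  unfolding pelt_def by (auto simp: rescale_loops_def intro: finite_subset[of _ "{p. f p \<noteq> 0}"])

lemma rescale_loops_inverse: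
  assumes "\<forall>i. g i \<noteq> 0"
  shows "rescale_loops (\<lambda>i. inverse (g i)) (rescale_loops g f) = f"
proof -
  have "prod_list (map (loop_weight (\<lambda>i. inverse (g i))) ws) * prod_list (map (loop_weight g) ws) = 1"
    for ws
  proof (induction ws)
    case (Cons x ws)
    have "loop_weight (\<lambda>i. inverse (g i)) x * loop_weight g x = 1" using assms by (cases x) auto
    then show ?case using Cons by (simp add: mult_ac)
  qed simp
  then show ?thesis
    by (intro ext) (auto simp: rescale_loops_def mult.assoc[symmetric])
qed

lemma rescale_loops_brel:
  assumes "g i \<noteq> 0" "p i = q i * g (Suc i mod n) / g i"
  shows "rescale_loops g (brel n q i) = psmult (g i) (brel n p i)"
  by (rule ext, clarify)
    (use assms in \<open>auto simp: brel_def rescale_loops_def psub_def psmult_def pbasis_def field_simps\<close>)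

lemma rescale_loops_rel_ideal:
  assumes "\<forall>i. g i \<noteq> 0" "\<forall>i<n. p i = q i * g (Suc i mod n) / g i"
  shows "x \<in> rel_ideal n q \<Longrightarrow> rescale_loops g x \<in> rel_ideal n p"
proof (induction rule: rel_ideal.induct)
  case zero
  have "rescale_loops g (\<lambda>_. 0) = (\<lambda>_. 0)" by (rule ext) (simp add: rescale_loops_def)
  then show ?case by (simp add: rel_ideal.zero)
next
  case (gen x y i)
  then have "rescale_loops g (pmult n (pmult n x (brel n q i)) y) =
      pmult n (pmult n (psmult (g i) (rescale_loops g x)) (brel n p i)) (rescale_loops g y)"
    using assms rescale_loops_brel[of g i p q n]
    by (simp add: rescale_loops_pmult pmult_psmult_left pmult_psmult_right)
  then show ?case using gen by (simp add: rel_ideal.gen)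
next
  case (add f h)
  then show ?case by (simp add: rescale_loops_padd rel_ideal.add)
qed

lemma B_iso_if_gauge:
  assumes g: "\<forall>i. g i \<noteq> 0" and rel: "\<forall>i<n. p i = q i * g (Suc i mod n) / g i"
  shows "B_iso n q p"
proof -
  let ?\<phi> = "rescale_loops g" and ?\<psi> = "rescale_loops (\<lambda>i. inverse (g i))"
  have zero: "(\<lambda>_. 0) \<in> rel_ideal n p" by (rule rel_ideal.zero)
  have rel': "\<forall>i<n. q i = p i * inverse (g (Suc i mod n)) / inverse (g i)"
    using rel g by (auto simp: field_simps)
  have ker: "?\<phi> x \<in> rel_ideal n p \<longleftrightarrow> x \<in> rel_ideal n q" for x
    using rescale_loops_rel_ideal[OF _ rel', of "?\<phi> x"] rescale_loops_rel_ideal[OF g rel, of x]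
    by (auto simp: g rescale_loops_inverse)
  have "\<exists>x. pelt n x \<and> psub (?\<phi> x) y \<in> rel_ideal n p" if "pelt n y" for y
    using that g rescale_loops_inverse[of "\<lambda>i. inverse (g i)" y]
    by (intro exI[of _ "?\<psi> y"]) (simp add: psub_self zero)
  then show ?thesis
    unfolding B_iso_def using ker
    by (intro exI[of _ ?\<phi>])
      (simp add: rescale_loops_padd rescale_loops_psmult rescale_loops_pmult rescale_loops_punit
        psub_self zero)
qed

section \<open>Representations of \<open>B\<^sub>n(q)\<close> in upper triangular matrices\<close>

lemma orthogonal_idempotents_idom:
  fixes f :: "nat \<Rightarrow> 'a::idom"
  assumes orth: "\<And>v w. v < n \<Longrightarrow> w < n \<Longrightarrow> f v * f w = (if v = w then f v else 0)"
    and sum1: "(\<Sum>v<n. f v) = 1"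
  shows "\<exists>a<n. \<forall>v<n. f v = (if v = a then 1 else 0)"
proof -
  have idem: "f v = 0 \<or> f v = 1" if "v < n" for v
  proof -
    have "f v * (f v - 1) = 0" using orth[OF that that] by (simp add: algebra_simps)
    then show ?thesis by simp
  qed
  obtain a where a: "a < n" "f a \<noteq> 0"
  proof (rule ccontr)
    assume "\<not> thesis"
    then have "(\<Sum>v<n. f v) = 0" using that by (intro sum.neutral) blast
    then show False using sum1 by simp
  qed
  then have "f a = 1" using idem by blast
  moreover have "f v = 0" if "v < n" "v \<noteq> a" for v
    using orth[OF that(1) a(1)] that \<open>f a = 1\<close> by simp
  ultimately show ?thesis using a by auto
qed

locale ut2_rep =
  fixes n :: nat and q :: "nat \<Rightarrow> 'k::field" and H :: "(qpath \<Rightarrow> 'k) \<Rightarrow> 'k poly ut2"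
  assumes n2: "2 \<le> n"
    and H_padd: "\<And>x y. pelt n x \<Longrightarrow> pelt n y \<Longrightarrow> H (padd x y) = H x + H y"
    and H_psmult: "\<And>c x. pelt n x \<Longrightarrow> H (psmult c x) = ut2_const c * H x"
    and H_pmult: "\<And>x y. pelt n x \<Longrightarrow> pelt n y \<Longrightarrow> H (pmult n x y) = H x * H y"
    and H_punit: "H (punit n) = 1"
    and H_brel: "\<And>i. i < n \<Longrightarrow> H (brel n q i) = 0"
begin

lemma H_zero: "H (\<lambda>_. 0) = 0"
proof -
  have "psmult 0 (punit n) = (\<lambda>_. 0::'k)" by (simp add: psmult_def)
  then show ?thesis using H_psmult[of "punit n" 0] by (simp add: ut2_const_hom)
qed

lemma H_psub: "pelt n x \<Longrightarrow> pelt n y \<Longrightarrow> H (psub x y) = H x - H y"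
  by (simp add: psub_as_padd H_padd H_psmult ut2_const_hom)

lemma H_sum: "(\<And>i. i \<in> I \<Longrightarrow> pelt n (G i)) \<Longrightarrow> H (\<Sum>i\<in>I. G i) = (\<Sum>i\<in>I. H (G i))"
proof (induction I rule: infinite_finite_induct)
  case (insert i I)
  then have "H (padd (G i) (sum G I)) = H (G i) + H (sum G I)"
    by (intro H_padd) (auto intro!: pelt_sum)
  with insert show ?case by (simp add: padd_def)
qed (simp_all add: H_zero zero_fun_def)

lemma H_gen_e_mult:
  "v < n \<Longrightarrow> w < n \<Longrightarrow> H (gen_e v) * H (gen_e w) = (if v = w then H (gen_e v) else 0)"
  using H_pmult[of "gen_e v" "gen_e w"] by (cases "v = w") (simp_all add: pmult_pbasis H_zero)

lemma H_gen_e_sum: "(\<Sum>v<n. H (gen_e v)) = 1"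
  using H_punit unfolding punit_eq_sum by (subst (asm) H_sum) auto

lemma ut11_gen_e: "\<exists>a<n. \<forall>v<n. ut11 (H (gen_e v)) = (if v = a then 1 else 0)"
proof (rule orthogonal_idempotents_idom)
  show "ut11 (H (gen_e v)) * ut11 (H (gen_e w)) = (if v = w then ut11 (H (gen_e v)) else 0)"
    if "v < n" "w < n" for v w
    using arg_cong[OF H_gen_e_mult[OF that], of ut11] by (auto split: if_splits)
  show "(\<Sum>v<n. ut11 (H (gen_e v))) = 1" using arg_cong[OF H_gen_e_sum, of ut11] by simp
qed

lemma ut22_gen_e: "\<exists>a<n. \<forall>v<n. ut22 (H (gen_e v)) = (if v = a then 1 else 0)"
proof (rule orthogonal_idempotents_idom)
  show "ut22 (H (gen_e v)) * ut22 (H (gen_e w)) = (if v = w then ut22 (H (gen_e v)) else 0)"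
    if "v < n" "w < n" for v w
    using arg_cong[OF H_gen_e_mult[OF that], of ut22] by (auto split: if_splits)
  show "(\<Sum>v<n. ut22 (H (gen_e v))) = 1" using arg_cong[OF H_gen_e_sum, of ut22] by simp
qed

lemma H_gen_a:
  assumes i: "i < n"
  shows "ut11 (H (gen_a i)) = 0" "ut22 (H (gen_a i)) = 0"
    and "ut12 (H (gen_a i)) = ut11 (H (gen_e i)) * ut12 (H (gen_a i)) * ut22 (H (gen_e (Suc i mod n)))"
proof -
  have i': "Suc i mod n < n" using i by simp
  have left: "H (gen_a i) = H (gen_e i) * H (gen_a i)"
    using H_pmult[of "gen_e i" "gen_a i"] i by (simp add: pmult_pbasis)
  have right: "H (gen_a i) * H (gen_e i) = 0"
    using H_pmult[of "gen_a i" "gen_e i"] i Suc_mod_neq[OF n2 i] by (simp add: pmult_pbasis H_zero)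
  have "ut11 (H (gen_a i)) = ut11 (H (gen_a i)) * ut11 (H (gen_e i))"
    using arg_cong[OF left, of ut11] by (simp add: mult.commute)
  also have "\<dots> = 0" using arg_cong[OF right, of ut11] by simp
  finally show u: "ut11 (H (gen_a i)) = 0" .
  have "ut22 (H (gen_a i)) = ut22 (H (gen_a i)) * ut22 (H (gen_e i))"
    using arg_cong[OF left, of ut22] by (simp add: mult.commute)
  also have "\<dots> = 0" using arg_cong[OF right, of ut22] by simp
  finally show w: "ut22 (H (gen_a i)) = 0" .
  have "H (gen_a i) = H (gen_e i) * (H (gen_a i) * H (gen_e (Suc i mod n)))"
    using H_pmult[of "gen_a i" "gen_e (Suc i mod n)"] left i i' by (simp add: pmult_pbasis)
  from arg_cong[OF this, of ut12]
  show "ut12 (H (gen_a i)) = ut11 (H (gen_e i)) * ut12 (H (gen_a i)) * ut22 (H (gen_e (Suc i mod n)))"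
    using u w by (simp add: mult.assoc)
qed

lemma H_brel_ut12:
  assumes i: "i < n"
  shows "ut11 (H (gen_b i)) * ut12 (H (gen_a i)) =
    smult (q i) (ut12 (H (gen_a i)) * ut22 (H (gen_b (Suc i mod n))))"
proof -
  have "H (gen_b i) * H (gen_a i) = ut2_const (q i) * (H (gen_a i) * H (gen_b (Suc i mod n)))"
    using H_brel[OF i] i unfolding brel_eq by (simp add: H_psub H_psmult H_pmult)
  from arg_cong[OF this, of ut12] show ?thesis
    using H_gen_a(1,2)[OF i] by (simp add: ut2_const_mult_left mult.commute)
qed

lemma commute_with_image:
  assumes a0: "\<And>i. i < n \<Longrightarrow> H (gen_a i) = 0"
    and comm_e: "\<And>v. v < n \<Longrightarrow> g * H (gen_e v) = H (gen_e v) * g"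
    and comm_b: "\<And>v. v < n \<Longrightarrow> g * H (gen_b v) = H (gen_b v) * g"
    and x: "pelt n x"
  shows "g * H x = H x * g"
  using x
proof (induction rule: pelt_induct)
  case (smult c f)
  have "g * H (psmult c f) = (g * ut2_const c) * H f" using smult by (simp add: H_psmult mult.assoc)
  also have "\<dots> = ut2_const c * (g * H f)"
    by (simp only: ut2_const_commute[of c g, symmetric] mult.assoc)
  also have "\<dots> = H (psmult c f) * g" using smult by (simp add: H_psmult mult.assoc)
  finally show ?case .
next
  case (mult f h)
  have "g * H (pmult n f h) = (g * H f) * H h" using mult(1,2) by (simp add: H_pmult mult.assoc)
  also have "\<dots> = H f * (g * H h)" using mult(3) by (simp add: mult.assoc[symmetric])
  also have "\<dots> = H (pmult n f h) * g" using mult(1,2,4) by (simp add: H_pmult mult.assoc)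
  finally show ?case .
qed (simp_all add: H_zero H_padd ring_distribs a0 comm_e comm_b)

lemma image_commutative_if_arrows_vanish:
  assumes a0: "\<And>i. i < n \<Longrightarrow> H (gen_a i) = 0" and x: "pelt n x" and y: "pelt n y"
  shows "H x * H y = H y * H x"
proof -
  have H_commute: "H x * H y = H y * H x" if "pelt n x" "pelt n y" "pmult n x y = pmult n y x" for x y
  proof -
    have "H x * H y = H (pmult n x y)" using that(1,2) by (simp add: H_pmult)
    also have "\<dots> = H (pmult n y x)" using that(3) by (rule arg_cong)
    also have "\<dots> = H y * H x" using that(1,2) by (simp add: H_pmult)
    finally show ?thesis .
  qed
  have gens: "H (gen_e v) * H (gen_e w) = H (gen_e w) * H (gen_e v)"
    "H (gen_b v) * H (gen_e w) = H (gen_e w) * H (gen_b v)"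
    "H (gen_b v) * H (gen_b w) = H (gen_b w) * H (gen_b v)" if "v < n" "w < n" for v w
    using that by (intro H_commute; simp add: pmult_pbasis)+
  have "H (gen_e w) * H z = H z * H (gen_e w)" "H (gen_b w) * H z = H z * H (gen_b w)"
    if "w < n" "pelt n z" for w z
    by (rule commute_with_image[OF a0 _ _ that(2)], use that gens in auto)+
  note commutes = this
  show ?thesis
    by (rule commute_with_image[OF a0 _ _ y]) (use x commutes in auto)
qed

lemma H_gen_b_absorbs: "v < n \<Longrightarrow> H (gen_b v) = H (gen_e v) * H (gen_b v)"
  using H_pmult[of "gen_e v" "gen_b v"] by (simp add: pmult_pbasis)

lemma ut11_polynomial_in_loop:
  assumes diag: "\<And>v. v < n \<Longrightarrow> ut11 (H (gen_e v)) = (if v = a then 1 else 0)"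
    and x: "pelt n x"
  shows "\<exists>h. ut11 (H x) = pcompose h (ut11 (H (gen_b a)))"
  using x
proof (induction rule: pelt_induct)
  case zero
  then show ?case by (intro exI[of _ 0]) (simp add: H_zero)
next
  case (add f g)
  then obtain h1 h2 where "ut11 (H f) = pcompose h1 (ut11 (H (gen_b a)))"
    "ut11 (H g) = pcompose h2 (ut11 (H (gen_b a)))" by blast
  with add show ?case by (intro exI[of _ "h1 + h2"]) (simp add: H_padd pcompose_add)
next
  case (smult c f)
  then obtain h where "ut11 (H f) = pcompose h (ut11 (H (gen_b a)))" by blast
  with smult show ?case
    by (intro exI[of _ "smult c h"]) (simp add: H_psmult ut2_const_mult_left pcompose_smult)
next
  case (mult f g)
  then obtain h1 h2 where "ut11 (H f) = pcompose h1 (ut11 (H (gen_b a)))"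
    "ut11 (H g) = pcompose h2 (ut11 (H (gen_b a)))" by blast
  with mult show ?case by (intro exI[of _ "h1 * h2"]) (simp add: H_pmult pcompose_mult)
next
  case (e v)
  then show ?case
    using diag[OF e] by (intro exI[of _ "[:if v = a then 1 else 0:]"]) (simp add: pcompose_const)
next
  case (a i)
  then show ?case using H_gen_a(1) by (intro exI[of _ 0]) simp
next
  case (b v)
  then have "ut11 (H (gen_b v)) = (if v = a then ut11 (H (gen_b a)) else 0)"
    using arg_cong[OF H_gen_b_absorbs[OF b], of ut11] diag[OF b] by (auto split: if_splits)
  then show ?case by (intro exI[of _ "if v = a then [:0, 1:] else 0"]) (simp add: pcompose_pCons)
qed

definition anchored_at :: "nat \<Rightarrow> bool" where
  "anchored_at i \<longleftrightarrow> i < n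
    \<and> (\<forall>v<n. ut11 (H (gen_e v)) = (if v = i then 1 else 0))
    \<and> (\<forall>v<n. ut22 (H (gen_e v)) = (if v = Suc i mod n then 1 else 0))
    \<and> degree (ut11 (H (gen_b i))) = 1
    \<and> ut11 (H (gen_b i)) = smult (q i) (ut22 (H (gen_b (Suc i mod n))))"

lemma anchored_at_unique:
  assumes "anchored_at i" "anchored_at j"
  shows "i = j"
proof -
  have "i < n" "\<forall>v<n. ut11 (H (gen_e v)) = (if v = i then 1 else 0)"
    using assms(1) unfolding anchored_at_def by blast+
  moreover have "\<forall>v<n. ut11 (H (gen_e v)) = (if v = j then 1 else 0)"
    using assms(2) unfolding anchored_at_def by blast
  ultimately have "(if i = j then 1 else 0) = (1 :: 'k poly)" by simp
  then show ?thesis by (simp split: if_splits)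
qed

lemma arrow_off_diagonal:
  assumes E11: "\<exists>x. pelt n x \<and> H x = UT2 1 0 0" and E12: "\<exists>x. pelt n x \<and> H x = UT2 0 1 0"
  shows "\<exists>i<n. ut12 (H (gen_a i)) \<noteq> 0"
proof (rule ccontr)
  assume "\<not> ?thesis"
  then have "\<And>i. i < n \<Longrightarrow> H (gen_a i) = 0"
    using H_gen_a(1,2) by (auto simp: ut2_eq_iff)
  moreover obtain x1 x2 where "pelt n x1" "H x1 = UT2 1 0 0" "pelt n x2" "H x2 = UT2 0 1 0"
    using E11 E12 by blast
  ultimately show False
    using image_commutative_if_arrows_vanish[of x1 x2] by (simp add: ut2_eq_iff)
qed

lemma anchored_at_exists:
  assumes E11: "\<exists>x. pelt n x \<and> H x = UT2 1 0 0"
    and E12: "\<exists>x. pelt n x \<and> H x = UT2 0 1 0"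
    and linear: "\<exists>x. pelt n x \<and> degree (ut11 (H x)) = 1"
  shows "\<exists>i. anchored_at i"
proof -
  obtain i where i: "i < n" and m: "ut12 (H (gen_a i)) \<noteq> 0"
    using arrow_off_diagonal[OF E11 E12] by blast
  let ?i' = "Suc i mod n"
  have i': "?i' < n" using i by simp
  obtain a where a: "a < n" "\<And>v. v < n \<Longrightarrow> ut11 (H (gen_e v)) = (if v = a then 1 else 0)"
    using ut11_gen_e by blast
  obtain b where b: "b < n" "\<And>v. v < n \<Longrightarrow> ut22 (H (gen_e v)) = (if v = b then 1 else 0)"
    using ut22_gen_e by blast
  have "a = i" and "b = ?i'"
    using H_gen_a(3)[OF i] m a(2)[OF i] b(2)[OF i'] by (auto split: if_splits)
  obtain x where x: "pelt n x" "degree (ut11 (H x)) = 1" using linear by blast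
  then obtain h where "ut11 (H x) = pcompose h (ut11 (H (gen_b i)))"
    using ut11_polynomial_in_loop[OF a(2)] \<open>a = i\<close> by blast
  then have "degree h * degree (ut11 (H (gen_b i))) = 1"
    using x(2) by (simp add: degree_pcompose)
  then have "degree (ut11 (H (gen_b i))) = 1" by simp
  moreover have "(ut11 (H (gen_b i)) - smult (q i) (ut22 (H (gen_b ?i')))) * ut12 (H (gen_a i)) = 0"
    using H_brel_ut12[OF i] by (simp add: algebra_simps)
  then have "ut11 (H (gen_b i)) = smult (q i) (ut22 (H (gen_b ?i')))"
    using m by simp
  ultimately show ?thesis
    unfolding anchored_at_def using i a b \<open>a = i\<close> \<open>b = ?i'\<close> by blast
qed

end

section \<open>Isomorphisms preserve the product of the parameters\<close>

text \<open>The representation \<open>\<rho>\<^sub>j\<close> of \<open>B\<^sub>n(p)\<close>; the factor \<open>1 / p\<^sub>j\<close> in the image of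
  \<open>b\<^bsub>j+1\<^esub>\<close> is what makes \<open>b\<^sub>j a\<^sub>j = p\<^sub>j a\<^sub>j b\<^bsub>j+1\<^esub>\<close> hold.\<close>


definition std_vertex :: "nat \<Rightarrow> nat \<Rightarrow> nat \<Rightarrow> 'k::field poly ut2" where
  "std_vertex n j v = (if v = j then UT2 1 0 0 else 0) + (if v = Suc j mod n then UT2 0 0 1 else 0)"

definition std_arrow :: "nat \<Rightarrow> (nat \<Rightarrow> 'k::field) \<Rightarrow> nat \<Rightarrow> arr \<Rightarrow> 'k poly ut2" where
  "std_arrow n p j x = (case x of
       Arr_a i \<Rightarrow> if i = j then UT2 0 1 0 else 0
     | Arr_b i \<Rightarrow> (if i = j then UT2 [:0, 1:] 0 0 else 0)
         + (if i = Suc j mod n then UT2 0 0 [:0, inverse (p j):] else 0))"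

definition std_rep :: "nat \<Rightarrow> (nat \<Rightarrow> 'k::field) \<Rightarrow> nat \<Rightarrow> (qpath \<Rightarrow> 'k) \<Rightarrow> 'k poly ut2" where
  "std_rep n p j = qrep (std_vertex n j) (std_arrow n p j)"

lemma std_vertex_sel:
  "ut11 (std_vertex n j v) = (if v = j then 1 else 0)"
  "ut12 (std_vertex n j v) = 0"
  "ut22 (std_vertex n j v) = (if v = Suc j mod n then 1 else 0)"
  by (auto simp: std_vertex_def)

lemma std_arrow_sel:
  "ut11 (std_arrow n p j (Arr_a i)) = 0"
  "ut12 (std_arrow n p j (Arr_a i)) = (if i = j then 1 else 0)"
  "ut22 (std_arrow n p j (Arr_a i)) = 0"
  "ut11 (std_arrow n p j (Arr_b i)) = (if i = j then [:0, 1:] else 0)"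
  "ut12 (std_arrow n p j (Arr_b i)) = 0"
  "ut22 (std_arrow n p j (Arr_b i)) = (if i = Suc j mod n then [:0, inverse (p j):] else 0)"
  by (auto simp: std_arrow_def)

lemma quiver_rep_std:
  assumes "2 \<le> n" "j < n"
  shows "quiver_rep n (std_vertex n j) (std_arrow n p j)"
  using Suc_mod_neq[OF assms]
  by unfold_locales (auto simp: ut2_eq_iff std_vertex_sel std_arrow_sel)

lemma std_rep_brel:
  assumes n2: "2 \<le> n" and j: "j < n" and i: "i < n" and pj: "p j \<noteq> 0"
  shows "std_rep n p j (brel n p i) = 0"
proof -
  have "std_rep n p j (brel n p i) =
      qrep_path (std_vertex n j) (std_arrow n p j) (i, [Arr_b i, Arr_a i])
      - ut2_const (p i) * qrep_path (std_vertex n j) (std_arrow n p j) (i, [Arr_a i, Arr_b (Suc i mod n)])"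
    unfolding std_rep_def brel_def using i by (simp add: qrep_psub[of n] qrep_psmult valid_path_def)
  also have "\<dots> = 0"
    using Suc_mod_neq[OF n2 j] pj
    by (cases "i = j")
      (auto simp: qrep_path_simps ut2_eq_iff std_vertex_sel std_arrow_sel ut2_const_mult_left)
  finally show ?thesis .
qed

lemma std_rep_rel_ideal:
  assumes "2 \<le> n" "j < n" "\<forall>i<n. p i \<noteq> 0" "x \<in> rel_ideal n p"
  shows "std_rep n p j x = 0"
  unfolding std_rep_def
  by (rule quiver_rep.qrep_rel_ideal[OF quiver_rep_std[OF assms(1,2)] _ assms(4)])
    (use std_rep_brel[OF assms(1,2)] assms(2,3) in \<open>auto simp: std_rep_def\<close>)

lemma std_rep_cong:
  assumes "2 \<le> n" "j < n" "\<forall>i<n. p i \<noteq> 0"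
    and "pelt n x" "pelt n y" "psub x y \<in> rel_ideal n p"
  shows "std_rep n p j x = std_rep n p j y"
  using std_rep_rel_ideal[OF assms(1-3,6)] assms(4,5) by (simp add: std_rep_def qrep_psub[of n])

lemma std_rep_punit:
  assumes "2 \<le> n" "j < n"
  shows "std_rep n p j (punit n) = 1"
  using assms Suc_mod_neq[OF assms]
  by (simp add: std_rep_def quiver_rep.qrep_punit[OF quiver_rep_std[OF assms]]
      ut2_eq_iff std_vertex_sel sum.delta)

lemma std_rep_gens:
  assumes "2 \<le> n" "j < n"
  shows "std_rep n p j (gen_e j) = UT2 1 0 0" "std_rep n p j (gen_a j) = UT2 0 1 0"
    "std_rep n p j (gen_b j) = UT2 [:0, 1:] 0 0"
  using Suc_mod_neq[OF assms]
  by (auto simp: std_rep_def qrep_path_simps ut2_eq_iff std_vertex_sel std_arrow_sel)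

lemma std_rep_ut22_eq_ut11_next:
  assumes n2: "2 \<le> n" and j: "j < n" and y: "pelt n y"
  shows "ut22 (std_rep n p j y) = pcompose (ut11 (std_rep n p (Suc j mod n) y)) [:0, inverse (p j):]"
  using y
proof (induction rule: pelt_induct)
  case (add f g)
  then show ?case by (simp add: std_rep_def qrep_padd[of n] pcompose_add)
next
  case (smult c f)
  then show ?case by (simp add: std_rep_def qrep_psmult ut2_const_mult_left pcompose_smult)
next
  case (mult f g)
  have "Suc j mod n < n" using j by simp
  with mult show ?case
    by (simp add: std_rep_def quiver_rep.qrep_pmult[OF quiver_rep_std[OF n2 j]]
        quiver_rep.qrep_pmult[OF quiver_rep_std[OF n2]] pcompose_mult)
qed (auto simp: std_rep_def qrep_path_simps std_vertex_sel std_arrow_sel pcompose_pCons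
    pcompose_const one_pCons)

lemma prod_lessThan_Suc_mod:
  fixes g :: "nat \<Rightarrow> 'a::comm_monoid_mult"
  assumes "0 < n"
  shows "(\<Prod>j<n. g (Suc j mod n)) = (\<Prod>j<n. g j)"
proof -
  obtain m where m: "n = Suc m" using assms by (cases n) auto
  have "(\<Prod>j<Suc m. g (Suc j mod Suc m)) = (\<Prod>j<m. g (Suc j mod Suc m)) * g 0"
    by (simp add: prod.lessThan_Suc)
  also have "\<dots> = g 0 * (\<Prod>j<m. g (Suc j))"
    by (simp add: mult.commute)
  also have "\<dots> = (\<Prod>j<Suc m. g j)"
    by (rule prod.lessThan_Suc_shift[symmetric])
  finally show ?thesis using m by simp
qed

lemma prod_lessThan_add_mod:
  fixes g :: "nat \<Rightarrow> 'a::comm_monoid_mult"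
  assumes "0 < n"
  shows "(\<Prod>j<n. g ((j + c) mod n)) = (\<Prod>j<n. g j)"
proof (induction c)
  case (Suc c)
  have "(\<Prod>j<n. g ((j + Suc c) mod n)) = (\<Prod>j<n. g ((Suc j mod n + c) mod n))"
    by (intro prod.cong) (simp_all add: mod_add_left_eq)
  also have "\<dots> = (\<Prod>j<n. g ((j + c) mod n))"
    using prod_lessThan_Suc_mod[OF assms, of "\<lambda>j. g ((j + c) mod n)"] .
  finally show ?case using Suc by simp
qed simp

locale B_isomorphism =
  fixes n :: nat and q p :: "nat \<Rightarrow> 'k::field" and \<Phi> :: "(qpath \<Rightarrow> 'k) \<Rightarrow> (qpath \<Rightarrow> 'k)"
  assumes n2: "2 \<le> n" and p_nonzero: "\<forall>i<n. p i \<noteq> 0"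
    and \<Phi>_pelt: "\<forall>x. pelt n x \<longrightarrow> pelt n (\<Phi> x)"
    and \<Phi>_padd: "\<forall>x y. pelt n x \<longrightarrow> pelt n y \<longrightarrow> psub (\<Phi> (padd x y)) (padd (\<Phi> x) (\<Phi> y)) \<in> rel_ideal n p"
    and \<Phi>_psmult: "\<forall>c x. pelt n x \<longrightarrow> psub (\<Phi> (psmult c x)) (psmult c (\<Phi> x)) \<in> rel_ideal n p"
    and \<Phi>_pmult: "\<forall>x y. pelt n x \<longrightarrow> pelt n y \<longrightarrow>
      psub (\<Phi> (pmult n x y)) (pmult n (\<Phi> x) (\<Phi> y)) \<in> rel_ideal n p"
    and \<Phi>_punit: "psub (\<Phi> (punit n)) (punit n) \<in> rel_ideal n p"
    and \<Phi>_kernel: "\<forall>x. pelt n x \<longrightarrow> (\<Phi> x \<in> rel_ideal n p \<longleftrightarrow> x \<in> rel_ideal n q)"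
    and \<Phi>_surj: "\<forall>y. pelt n y \<longrightarrow> (\<exists>x. pelt n x \<and> psub (\<Phi> x) y \<in> rel_ideal n p)"
begin

definition pullback :: "nat \<Rightarrow> (qpath \<Rightarrow> 'k) \<Rightarrow> 'k poly ut2" where
  "pullback j x = std_rep n p j (\<Phi> x)"

lemma ut2_rep_pullback:
  assumes j: "j < n"
  shows "ut2_rep n q (pullback j)"
proof
  fix x y :: "qpath \<Rightarrow> 'k" assume x: "pelt n x" and y: "pelt n y"
  have "pullback j (padd x y) = std_rep n p j (padd (\<Phi> x) (\<Phi> y))"
    unfolding pullback_def by (rule std_rep_cong[OF n2 j p_nonzero]) (use x y \<Phi>_padd \<Phi>_pelt in auto)
  then show "pullback j (padd x y) = pullback j x + pullback j y"
    using x y \<Phi>_pelt by (simp add: pullback_def std_rep_def qrep_padd[of n])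
  have "pullback j (pmult n x y) = std_rep n p j (pmult n (\<Phi> x) (\<Phi> y))"
    unfolding pullback_def by (rule std_rep_cong[OF n2 j p_nonzero]) (use x y \<Phi>_pmult \<Phi>_pelt in auto)
  then show "pullback j (pmult n x y) = pullback j x * pullback j y"
    using x y \<Phi>_pelt
    by (simp add: pullback_def std_rep_def quiver_rep.qrep_pmult[OF quiver_rep_std[OF n2 j]])
next
  fix c and x :: "qpath \<Rightarrow> 'k" assume x: "pelt n x"
  have "pullback j (psmult c x) = std_rep n p j (psmult c (\<Phi> x))"
    unfolding pullback_def by (rule std_rep_cong[OF n2 j p_nonzero]) (use x \<Phi>_psmult \<Phi>_pelt in auto)
  then show "pullback j (psmult c x) = ut2_const c * pullback j x"
    by (simp add: pullback_def std_rep_def qrep_psmult)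
next
  have "pullback j (punit n) = std_rep n p j (punit n)"
    unfolding pullback_def by (rule std_rep_cong[OF n2 j p_nonzero]) (use \<Phi>_punit \<Phi>_pelt in auto)
  then show "pullback j (punit n) = 1" using std_rep_punit[OF n2 j] by simp
next
  fix i assume "i < n"
  then have "\<Phi> (brel n q i) \<in> rel_ideal n p"
    using \<Phi>_kernel brel_in_rel_ideal[of i n q] by auto
  then show "pullback j (brel n q i) = 0"
    unfolding pullback_def by (rule std_rep_rel_ideal[OF n2 j p_nonzero])
qed (rule n2)

lemma pullback_anchored:
  assumes j: "j < n"
  shows "\<exists>i. ut2_rep.anchored_at n q (pullback j) i"
proof -
  have image: "\<exists>x. pelt n x \<and> pullback j x = std_rep n p j y" if y: "pelt n y" for y
  proof -
    obtain x where "pelt n x" "psub (\<Phi> x) y \<in> rel_ideal n p" using \<Phi>_surj y by blast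
    then show ?thesis
      unfolding pullback_def using std_rep_cong[OF n2 j p_nonzero _ y] \<Phi>_pelt by blast
  qed
  show ?thesis
    using image[of "gen_e j"] image[of "gen_a j"] image[of "gen_b j"] j
    by (intro ut2_rep.anchored_at_exists[OF ut2_rep_pullback[OF j]])
      (auto simp: std_rep_gens[OF n2 j])
qed

definition anchor :: "nat \<Rightarrow> nat" where
  "anchor j = (THE i. ut2_rep.anchored_at n q (pullback j) i)"

lemma anchored_at_anchor: "j < n \<Longrightarrow> ut2_rep.anchored_at n q (pullback j) (anchor j)"
  unfolding anchor_def
  by (rule theI') (use pullback_anchored ut2_rep.anchored_at_unique[OF ut2_rep_pullback] in blast)

lemma anchor_less: "j < n \<Longrightarrow> anchor j < n"
  using anchored_at_anchor by (simp add: ut2_rep.anchored_at_def[OF ut2_rep_pullback])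

lemma pullback_ut22_eq_ut11_next:
  "j < n \<Longrightarrow> pelt n x \<Longrightarrow>
    ut22 (pullback j x) = pcompose (ut11 (pullback (Suc j mod n) x)) [:0, inverse (p j):]"
  unfolding pullback_def using \<Phi>_pelt by (simp add: std_rep_ut22_eq_ut11_next[OF n2])

lemma anchor_Suc:
  assumes j: "j < n"
  shows "anchor (Suc j mod n) = Suc (anchor j) mod n"
proof -
  let ?j' = "Suc j mod n" and ?v = "Suc (anchor j) mod n"
  have j': "?j' < n" and v: "?v < n" using j by simp_all
  note A = ut2_rep.anchored_at_def[OF ut2_rep_pullback]
  have "pcompose (ut11 (pullback ?j' (gen_e ?v))) [:0, inverse (p j):] = 1"
    using anchored_at_anchor[OF j] v pullback_ut22_eq_ut11_next[OF j, of "gen_e ?v"]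
    by (simp add: A[OF j])
  moreover have "ut11 (pullback ?j' (gen_e ?v)) = (if ?v = anchor ?j' then 1 else 0)"
    using anchored_at_anchor[OF j'] v by (simp add: A[OF j'])
  ultimately show ?thesis by (auto split: if_splits)
qed

lemma anchor_eq: "j < n \<Longrightarrow> anchor j = (j + anchor 0) mod n"
proof (induction j)
  case 0 then show ?case using anchor_less[of 0] by simp
next
  case (Suc j)
  then have "anchor (Suc j) = Suc (anchor j) mod n" using anchor_Suc[of j] by simp
  also have "\<dots> = (Suc j + anchor 0) mod n" using Suc by (simp add: mod_Suc_eq)
  finally show ?case .
qed

definition slope :: "nat \<Rightarrow> 'k" where
  "slope j = coeff (ut11 (pullback j (gen_b (anchor j)))) 1"

lemma slope_nonzero:
  assumes "j < n"
  shows "slope j \<noteq> 0"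
proof -
  have "degree (ut11 (pullback j (gen_b (anchor j)))) = 1"
    using anchored_at_anchor[OF assms] unfolding ut2_rep.anchored_at_def[OF ut2_rep_pullback[OF assms]]
    by blast
  then show ?thesis
    unfolding slope_def by (metis leading_coeff_0_iff one_neq_zero degree_0)
qed

lemma slope_Suc:
  assumes j: "j < n"
  shows "p j * slope j = q (anchor j) * slope (Suc j mod n)"
proof -
  let ?j' = "Suc j mod n"
  have j': "?j' < n" using j by simp
  have "ut11 (pullback j (gen_b (anchor j))) = smult (q (anchor j)) (ut22 (pullback j (gen_b (anchor ?j'))))"
    using anchored_at_anchor[OF j] anchor_Suc[OF j]
    by (simp add: ut2_rep.anchored_at_def[OF ut2_rep_pullback[OF j]])
  also have "ut22 (pullback j (gen_b (anchor ?j'))) =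
      pcompose (ut11 (pullback ?j' (gen_b (anchor ?j')))) [:0, inverse (p j):]"
    using anchor_less[OF j'] by (simp add: pullback_ut22_eq_ut11_next[OF j])
  finally have "slope j = q (anchor j) * (inverse (p j) * slope ?j')"
    unfolding slope_def by (simp add: coeff_pcompose_linear)
  then show ?thesis using p_nonzero j by (simp add: field_simps)
qed

lemma prod_eq: "(\<Prod>i<n. p i) = (\<Prod>i<n. q i)"
proof -
  have n: "0 < n" using n2 by simp
  have "(\<Prod>j<n. p j) * (\<Prod>j<n. slope j) = (\<Prod>j<n. p j * slope j)"
    by (rule prod.distrib[symmetric])
  also have "\<dots> = (\<Prod>j<n. q ((j + anchor 0) mod n) * slope (Suc j mod n))"
    by (rule prod.cong) (simp_all add: slope_Suc flip: anchor_eq)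
  also have "\<dots> = (\<Prod>j<n. q ((j + anchor 0) mod n)) * (\<Prod>j<n. slope (Suc j mod n))"
    by (rule prod.distrib)
  also have "\<dots> = (\<Prod>j<n. q j) * (\<Prod>j<n. slope j)"
    unfolding prod_lessThan_add_mod[OF n] prod_lessThan_Suc_mod[OF n] ..
  finally show ?thesis
    using slope_nonzero by (simp add: prod_zero_iff)
qed

end

section \<open>The cyclic gauge condition\<close>

lemma prod_eq_if_cyclic_gauge:
  fixes p q \<alpha> :: "nat \<Rightarrow> 'k::field"
  assumes n: "0 < n" and \<alpha>: "\<forall>i<n. \<alpha> i \<noteq> 0"
    and rel: "\<forall>i<n. p i = \<alpha> ((i + k + 1) mod n) / \<alpha> ((i + k) mod n) * q ((i + k) mod n)"
  shows "(\<Prod>i<n. p i) = (\<Prod>i<n. q i)"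
proof -
  have "(\<Prod>i<n. p i) = (\<Prod>i<n. \<alpha> ((i + Suc k) mod n) / \<alpha> ((i + k) mod n) * q ((i + k) mod n))"
    by (rule prod.cong) (use rel in auto)
  also have "\<dots> = (\<Prod>i<n. \<alpha> ((i + Suc k) mod n)) / (\<Prod>i<n. \<alpha> ((i + k) mod n))
      * (\<Prod>i<n. q ((i + k) mod n))"
    by (simp add: prod.distrib prod_dividef)
  also have "\<dots> = (\<Prod>i<n. \<alpha> i) / (\<Prod>i<n. \<alpha> i) * (\<Prod>i<n. q i)"
    unfolding prod_lessThan_add_mod[OF n] ..
  also have "\<dots> = (\<Prod>i<n. q i)"
    using \<alpha> by (simp add: prod_zero_iff)
  finally show ?thesis .
qed

lemma cyclic_gauge_if_prod_eq:
  fixes p q :: "nat \<Rightarrow> 'k::field"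
  assumes n: "0 < n" and q: "\<forall>i<n. q i \<noteq> 0" and p: "\<forall>i<n. p i \<noteq> 0"
    and prod: "(\<Prod>i<n. p i) = (\<Prod>i<n. q i)"
  shows "\<exists>g. (\<forall>i. g i \<noteq> 0) \<and> (\<forall>i<n. p i = q i * g (Suc i mod n) / g i)"
proof (intro exI conjI allI impI)
  define g where "g i = (if i < n then (\<Prod>j<i. p j / q j) else 1)" for i
  show g_nonzero: "g i \<noteq> 0" for i
    using p q by (auto simp: g_def prod_zero_iff)
  fix i assume i: "i < n"
  have "g (Suc i mod n) = g i * (p i / q i)"
  proof (cases "Suc i < n")
    case False
    then have "Suc i = n" using i by simp
    have "g i * (p i / q i) = (\<Prod>j<n. p j / q j)"
      using \<open>Suc i = n\<close> i by (simp add: g_def flip: \<open>Suc i = n\<close>)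
    also have "\<dots> = 1"
      using prod q by (simp add: prod_dividef prod_zero_iff)
    finally show ?thesis using \<open>Suc i = n\<close> n by (simp add: g_def)
  qed (simp add: g_def i)
  then show "p i = q i * g (Suc i mod n) / g i"
    using g_nonzero[of i] q i by (simp add: field_simps)
qed

lemma cyclic_gauge_iff_prod_eq:
  fixes p q :: "nat \<Rightarrow> 'k::field"
  assumes n: "0 < n" and q: "\<forall>i<n. q i \<noteq> 0" and p: "\<forall>i<n. p i \<noteq> 0"
  shows "(\<exists>\<alpha>. \<exists>k<n. (\<forall>i<n. \<alpha> i \<noteq> 0) \<and>
      (\<forall>i<n. p i = \<alpha> ((i + k + 1) mod n) / \<alpha> ((i + k) mod n) * q ((i + k) mod n)))
    \<longleftrightarrow> (\<Prod>i<n. p i) = (\<Prod>i<n. q i)"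
proof
  assume "(\<Prod>i<n. p i) = (\<Prod>i<n. q i)"
  then obtain g where "\<forall>i. g i \<noteq> 0" "\<forall>i<n. p i = q i * g (Suc i mod n) / g i"
    using cyclic_gauge_if_prod_eq[OF n q p] by blast
  then show "\<exists>\<alpha>. \<exists>k<n. (\<forall>i<n. \<alpha> i \<noteq> 0) \<and>
      (\<forall>i<n. p i = \<alpha> ((i + k + 1) mod n) / \<alpha> ((i + k) mod n) * q ((i + k) mod n))"
    using n by (intro exI[of _ g] exI[of _ 0]) (simp add: mult.commute)
qed (use prod_eq_if_cyclic_gauge[OF n] in blast)

lemma B_iso_iff_prod_eq:
  fixes p q :: "nat \<Rightarrow> 'k::field"
  assumes n: "2 \<le> n" and q: "\<forall>i<n. q i \<noteq> 0" and p: "\<forall>i<n. p i \<noteq> 0"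
  shows "B_iso n q p \<longleftrightarrow> (\<Prod>i<n. p i) = (\<Prod>i<n. q i)"
proof
  assume "B_iso n q p"
  then have "\<exists>\<Phi>. B_isomorphism n q p \<Phi>"
    unfolding B_iso_def B_isomorphism_def using n p
    by (elim exE conjE) (rule exI, intro conjI, assumption+)
  then obtain \<Phi> where "B_isomorphism n q p \<Phi>" ..
  then show "(\<Prod>i<n. p i) = (\<Prod>i<n. q i)" by (rule B_isomorphism.prod_eq)
next
  assume "(\<Prod>i<n. p i) = (\<Prod>i<n. q i)"
  then obtain g where "\<forall>i. g i \<noteq> 0" "\<forall>i<n. p i = q i * g (Suc i mod n) / g i"
    using cyclic_gauge_if_prod_eq[OF _ q p] n by auto
  then show "B_iso n q p" by (rule B_iso_if_gauge)
qed

theorem theorem2p10: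
  fixes n :: nat and q p :: "nat \<Rightarrow> 'k::field_char_0"
  assumes alg_closed: "\<forall>f :: 'k poly. degree f > 0 \<longrightarrow> (\<exists>x. poly f x = 0)"
    and "n \<ge> 2"
    and "\<forall>i<n. q i \<noteq> 0" and "\<forall>i<n. p i \<noteq> 0"
  shows "B_iso n q p \<longleftrightarrow>
    (\<exists>\<alpha> :: nat \<Rightarrow> 'k. \<exists>k<n. (\<forall>i<n. \<alpha> i \<noteq> 0) \<and>
       (\<forall>i<n. p i = \<alpha> ((i + k + 1) mod n) / \<alpha> ((i + k) mod n) * q ((i + k) mod n)))"
proof -
  have "0 < n" using \<open>n \<ge> 2\<close> by simp
  then show ?thesis
    using B_iso_iff_prod_eq[OF assms(2-4)] cyclic_gauge_iff_prod_eq[OF _ assms(3,4)] by simp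
qed

end
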